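(* Let $\delta\in[1/3,1]$, $\alpha>0$ with $\alpha\delta<1$, $\eta_0^{2}=\frac{1+\alpha^{2}}{1+\delta^{2}}$, and let $x\mapsto B_0(x)$ be a continuous function with values in $[0,\sqrt{1-\eta_0^2\delta^2}]$. Set $\widetilde{A_\ast}(x)=\sqrt{1-(1+\delta^2)B_0(x)^2}$ and let $\lambda_r(x),\lambda_i(x)\ge0$ be defined by $2\lambda_r^{2}=\sqrt2\,\widetilde{A_\ast}+\varepsilon^{2}B_0^{2}(1+\delta^{2})^{2}$, $2\lambda_i^{2}=\sqrt2\,\widetilde{A_\ast}-\varepsilon^{2}B_0^{2}(1+\delta^{2})^{2}$. Let $\mathbf S_0(x,s)$, $\mathbf S_1(x,s)$ be the solution (monodromy) operators on $\mathbb{R}^2$ of $X'=\mathbf L_0(x)X$ and $Y'=\mathbf L_1(x)Y$, where $$\mathbf L_0=\begin{pmatrix}\lambda_r&\lambda_i\\-\lambda_i&\lambda_r\end{pmatrix},\qquad \mathbf L_1=\begin{pmatrix}-\lambda_r&\lambda_i\\-\lambda_i&-\lambda_r\end{pmatrix},$$ i.e. $\partial_x\mathbf S_j(x,s)=\mathbf L_j(x)\mathbf S_j(x,s)$, $\mathbf S_j(x,x)=\mathbb I$. If $\alpha\ge\frac{10}{3}\varepsilon^2$ and $\varepsilon>0$ is small enough, then, with $\sigma=\frac{(\alpha\delta)^{1/2}}{2^{1/4}}$ and the operator norm induced by the Euclidean norm, $$\|\mathbf S_0(x,s)\|\le e^{\sigma(x-s)}\ \text{ for } x<s,\qquad \|\mathbf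 S_1(x,s)\|\le e^{-\sigma(x-s)}\ \text{ for } s<x.$$ *)

theory Defs
  imports "HOL-Analysis.Analysis"
begin

definition mat2 :: "real \<Rightarrow> real \<Rightarrow> real \<Rightarrow> real \<Rightarrow> real^2^2" where
  "mat2 a b c d = (\<chi> i j. if i = 1 then (if j = 1 then a else b) else (if j = 1 then c else d))"

definition L0 :: "(real \<Rightarrow> real) \<Rightarrow> (real \<Rightarrow> real) \<Rightarrow> real \<Rightarrow> real^2^2" where
  "L0 lr li x = mat2 (lr x) (li x) (- li x) (lr x)"

definition L1 :: "(real \<Rightarrow> real) \<Rightarrow> (real \<Rightarrow> real) \<Rightarrow> real \<Rightarrow> real^2^2" where
  "L1 lr li x = mat2 (- lr x) (li x) (- li x) (- lr x)"

definition is_solution_operator :: "(real \<Rightarrow> real^2^2) \<Rightarrow> (real \<Rightarrow> real \<Rightarrow> real^2^2) \<Rightarrow> bool" where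
  "is_solution_operator L S \<longleftrightarrow>
     (\<forall>s. S s s = mat 1 \<and> (\<forall>x. ((\<lambda>y. S y s) has_vector_derivative (L x ** S x s)) (at x)))"

definition opnorm :: "real^2^2 \<Rightarrow> real" where
  "opnorm M = onorm (\<lambda>v. M *v v)"

end

theory Submission
  imports Defs
begin

text \<open>
  \<open>L\<^sub>0\<close> and \<open>L\<^sub>1\<close> are \<open>\<plusminus>\<lambda>\<^sub>r\<close> times the identity plus a skew-symmetric matrix, so along a
  solution of \<open>X' = L\<^sub>j X\<close> we have \<open>(|X|\<^sup>2)' = \<plusminus>2\<lambda>\<^sub>r |X|\<^sup>2\<close>; monotonicity of
  \<open>exp(-2\<mu>x) |X(x)|\<^sup>2\<close> then bounds the solution operators by \<open>exp(\<mu>(x - s))\<close>. The bound on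
  \<open>B\<^sub>0\<close> is equivalent to \<open>\<alpha>\<delta> \<le> A\<^sub>*\<close>, and as the \<open>\<epsilon>\<close>-term in the equation for \<open>\<lambda>\<^sub>r\<close> is
  nonnegative, \<open>\<lambda>\<^sub>r\<^sup>2 \<ge> A\<^sub>*/\<surd>2 \<ge> \<alpha>\<delta>/\<surd>2 = \<sigma>\<^sup>2\<close>.
\<close>

lemma has_real_derivative_norm_power2:
  fixes f :: "real \<Rightarrow> 'a::real_inner"
  assumes "(f has_vector_derivative f') (at x)"
  shows "((\<lambda>y. (norm (f y))\<^sup>2) has_real_derivative 2 * (f x \<bullet> f')) (at x)"
proof -
  have "((\<lambda>y. f y \<bullet> f y) has_derivative (\<lambda>h. f x \<bullet> (h *\<^sub>R f') + (h *\<^sub>R f') \<bullet> f x)) (at x)"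
    using assms unfolding has_vector_derivative_def by (intro has_derivative_inner)
  moreover have "(\<lambda>h. f x \<bullet> (h *\<^sub>R f') + (h *\<^sub>R f') \<bullet> f x) = (*) (2 * (f x \<bullet> f'))"
    by (simp add: fun_eq_iff inner_commute)
  ultimately show ?thesis
    unfolding has_field_derivative_def dot_square_norm by simp
qed

lemma inner_mat2_conformal: "v \<bullet> (mat2 a b (- b) a *v v) = a * (norm v)\<^sup>2"
  by (simp add: mat2_def matrix_vector_mult_def inner_vec_def sum_2 norm_vec_def L2_set_def
      algebra_simps power2_eq_square)

lemma solution_operator_apply_has_vector_derivative:
  assumes "is_solution_operator L S"
  shows "((\<lambda>y. S y s *v v) has_vector_derivative L x *v (S x s *v v)) (at x)"
proof -
  have "((\<lambda>y. S y s) has_vector_derivative L x ** S x s) (at x)"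
    using assms unfolding is_solution_operator_def by blast
  moreover have "bounded_linear (\<lambda>M :: real^2^2. M *v v)"
    by (auto simp: linear_conv_bounded_linear[symmetric] intro!: linearI
        simp: matrix_vector_mult_add_rdistrib scaleR_matrix_vector_assoc)
  ultimately have "((\<lambda>y. S y s *v v) has_vector_derivative (L x ** S x s) *v v) (at x)"
    using bounded_linear.has_vector_derivative by blast
  then show ?thesis
    by (simp add: matrix_vector_mul_assoc)
qed

lemma solution_operator_weighted_norm_has_derivative:
  assumes "is_solution_operator L S"
  shows "((\<lambda>y. (norm (S y s *v v))\<^sup>2 * exp (- 2 * \<mu> * y)) has_real_derivative
           2 * exp (- 2 * \<mu> * x) * ((S x s *v v) \<bullet> (L x *v (S x s *v v)) - \<mu> * (norm (S x s *v v))\<^sup>2))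
         (at x)"
proof -
  have "((\<lambda>y. exp (- 2 * \<mu> * y)) has_real_derivative exp (- 2 * \<mu> * x) * (- 2 * \<mu>)) (at x)"
    by (auto intro!: derivative_eq_intros)
  from DERIV_mult[OF has_real_derivative_norm_power2[OF
        solution_operator_apply_has_vector_derivative[OF assms]] this]
  show ?thesis
    by (simp add: algebra_simps)
qed

lemma norm_le_exp_of_weighted_norm_le:
  fixes v w :: "'a::real_normed_vector"
  assumes "(norm w)\<^sup>2 * exp (- 2 * \<mu> * x) \<le> (norm v)\<^sup>2 * exp (- 2 * \<mu> * s)"
  shows "norm w \<le> exp (\<mu> * (x - s)) * norm v"
proof -
  have "(norm w)\<^sup>2 \<le> (norm v)\<^sup>2 * exp (- 2 * \<mu> * s) * exp (2 * \<mu> * x)"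
    using mult_right_mono[OF assms, of "exp (2 * \<mu> * x)"] by (simp add: mult.assoc flip: exp_add)
  also have "\<dots> = (exp (\<mu> * (x - s)) * norm v)\<^sup>2"
    by (simp add: power_mult_distrib algebra_simps flip: exp_add exp_double)
  finally show ?thesis
    by (rule power2_le_imp_le) simp
qed

lemma solution_operator_opnorm_le_backward:
  assumes S: "is_solution_operator L S"
    and L: "\<And>t w. \<mu> * (norm w)\<^sup>2 \<le> w \<bullet> (L t *v w)"
    and "x \<le> s"
  shows "opnorm (S x s) \<le> exp (\<mu> * (x - s))"
  unfolding opnorm_def
proof (rule onorm_le)
  fix v
  let ?h = "\<lambda>y. (norm (S y s *v v))\<^sup>2 * exp (- 2 * \<mu> * y)"
  have "?h x \<le> ?h s"
  proof (rule DERIV_nonneg_imp_nondecreasing[OF \<open>x \<le> s\<close>])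
    fix t
    show "\<exists>y. (?h has_real_derivative y) (at t) \<and> 0 \<le> y"
      using solution_operator_weighted_norm_has_derivative[OF S] L by fastforce
  qed
  then show "norm (S x s *v v) \<le> exp (\<mu> * (x - s)) * norm v"
    using S unfolding is_solution_operator_def by (simp add: norm_le_exp_of_weighted_norm_le)
qed

lemma solution_operator_opnorm_le_forward:
  assumes S: "is_solution_operator L S"
    and L: "\<And>t w. w \<bullet> (L t *v w) \<le> \<mu> * (norm w)\<^sup>2"
    and "s \<le> x"
  shows "opnorm (S x s) \<le> exp (\<mu> * (x - s))"
  unfolding opnorm_def
proof (rule onorm_le)
  fix v
  let ?h = "\<lambda>y. (norm (S y s *v v))\<^sup>2 * exp (- 2 * \<mu> * y)"
  have "?h x \<le> ?h s"
  proof (rule DERIV_nonpos_imp_nonincreasing[OF \<open>s \<le> x\<close>])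
    fix t
    show "\<exists>y. (?h has_real_derivative y) (at t) \<and> y \<le> 0"
      using solution_operator_weighted_norm_has_derivative[OF S] L
      by (fastforce simp: mult_le_0_iff)
  qed
  then show "norm (S x s *v v) \<le> exp (\<mu> * (x - s)) * norm v"
    using S unfolding is_solution_operator_def by (simp add: norm_le_exp_of_weighted_norm_le)
qed

lemma alpha_delta_le_sqrt:
  fixes \<alpha> \<delta> B :: real
  assumes "0 \<le> B" "B \<le> sqrt (1 - (1 + \<alpha>\<^sup>2) / (1 + \<delta>\<^sup>2) * \<delta>\<^sup>2)"
  shows "\<alpha> * \<delta> \<le> sqrt (1 - (1 + \<delta>\<^sup>2) * B\<^sup>2)"
proof -
  have "B\<^sup>2 \<le> 1 - (1 + \<alpha>\<^sup>2) / (1 + \<delta>\<^sup>2) * \<delta>\<^sup>2"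
    using assms by (metis order.trans power_mono real_sqrt_ge_0_iff real_sqrt_pow2)
  moreover have "0 < 1 + \<delta>\<^sup>2"
    by (simp add: add_pos_nonneg)
  ultimately have "(\<alpha> * \<delta>)\<^sup>2 \<le> 1 - (1 + \<delta>\<^sup>2) * B\<^sup>2"
    by (simp add: field_simps power_mult_distrib)
  then show ?thesis
    by (rule real_le_rsqrt)
qed

lemma powr_half_div_powr_quarter_le:
  fixes a A l :: real
  assumes "0 \<le> a" "a \<le> A" "0 \<le> l" "sqrt 2 * A \<le> 2 * l\<^sup>2"
  shows "a powr (1/2) / 2 powr (1/4) \<le> l"
proof (rule power2_le_imp_le[OF _ \<open>0 \<le> l\<close>])
  have "((2::real) powr (1/4))\<^sup>2 = sqrt 2"
    using powr_power[of "2::real" "1/4" 2] by (simp add: powr_half_sqrt)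
  moreover have "(a powr (1/2))\<^sup>2 = a"
    using \<open>0 \<le> a\<close> by (simp add: powr_half_sqrt)
  ultimately have "(a powr (1/2) / 2 powr (1/4))\<^sup>2 = a / sqrt 2"
    by (simp only: power_divide)
  also have "\<dots> \<le> A / sqrt 2"
    using \<open>a \<le> A\<close> by (simp add: divide_right_mono)
  also have "\<dots> = sqrt 2 * A / 2"
    by (simp add: field_simps)
  also have "\<dots> \<le> l\<^sup>2"
    using \<open>sqrt 2 * A \<le> 2 * l\<^sup>2\<close> by simp
  finally show "(a powr (1/2) / 2 powr (1/4))\<^sup>2 \<le> l\<^sup>2" .
qed

lemma solution_operators_exponential_bounds:
  fixes \<alpha> \<delta> \<epsilon> :: real and B0 lr li :: "real \<Rightarrow> real"
  defines "\<sigma> \<equiv> (\<alpha> * \<delta>) powr (1/2) / 2 powr (1/4)"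
  assumes "0 \<le> \<alpha> * \<delta>"
    and B0: "\<forall>x. 0 \<le> B0 x \<and> B0 x \<le> sqrt (1 - (1 + \<alpha>\<^sup>2) / (1 + \<delta>\<^sup>2) * \<delta>\<^sup>2)"
    and lr: "\<forall>x. 0 \<le> lr x \<and> 2 * (lr x)\<^sup>2 =
          sqrt 2 * sqrt (1 - (1 + \<delta>\<^sup>2) * (B0 x)\<^sup>2) + \<epsilon>\<^sup>2 * (B0 x)\<^sup>2 * (1 + \<delta>\<^sup>2)\<^sup>2"
    and S0: "is_solution_operator (L0 lr li) S0"
    and S1: "is_solution_operator (L1 lr li) S1"
  shows "(\<forall>x s. x < s \<longrightarrow> opnorm (S0 x s) \<le> exp (\<sigma> * (x - s))) \<and>
         (\<forall>x s. s < x \<longrightarrow> opnorm (S1 x s) \<le> exp (- \<sigma> * (x - s)))"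
proof -
  have \<sigma>_le_lr: "\<sigma> \<le> lr x" for x
    unfolding \<sigma>_def
  proof (rule powr_half_div_powr_quarter_le)
    show "\<alpha> * \<delta> \<le> sqrt (1 - (1 + \<delta>\<^sup>2) * (B0 x)\<^sup>2)"
      using B0 alpha_delta_le_sqrt by blast
    show "sqrt 2 * sqrt (1 - (1 + \<delta>\<^sup>2) * (B0 x)\<^sup>2) \<le> 2 * (lr x)\<^sup>2"
      using lr[rule_format, of x] by simp
  qed (use \<open>0 \<le> \<alpha> * \<delta>\<close> lr in blast)+
  have L0_lower: "\<sigma> * (norm w)\<^sup>2 \<le> w \<bullet> (L0 lr li t *v w)" for t w
    unfolding L0_def inner_mat2_conformal by (rule mult_right_mono[OF \<sigma>_le_lr]) simp
  have L1_upper: "w \<bullet> (L1 lr li t *v w) \<le> - \<sigma> * (norm w)\<^sup>2" for t w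
    unfolding L1_def inner_mat2_conformal mult_minus_left neg_le_iff_le
    by (rule mult_right_mono[OF \<sigma>_le_lr]) simp
  show ?thesis
    using solution_operator_opnorm_le_backward[OF S0 L0_lower]
      solution_operator_opnorm_le_forward[OF S1 L1_upper]
    by (meson less_imp_le)
qed

theorem lemma15:
  "\<exists>\<epsilon>0>0. \<forall>\<epsilon> \<delta> \<alpha> (B0 :: real \<Rightarrow> real) lr li S0 S1.
     0 < \<epsilon> \<and> \<epsilon> < \<epsilon>0 \<and>
     1/3 \<le> \<delta> \<and> \<delta> \<le> 1 \<and> 0 < \<alpha> \<and> \<alpha> * \<delta> < 1 \<and>
     \<alpha> \<ge> 10/3 * \<epsilon>^2 \<and>
     continuous_on UNIV B0 \<and>
     (\<forall>x. 0 \<le> B0 x \<and> B0 x \<le> sqrt (1 - (1 + \<alpha>^2) / (1 + \<delta>^2) * \<delta>^2)) \<and>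
     (\<forall>x. lr x \<ge> 0 \<and> 2 * (lr x)^2 =
          sqrt 2 * sqrt (1 - (1 + \<delta>^2) * (B0 x)^2) + \<epsilon>^2 * (B0 x)^2 * (1 + \<delta>^2)^2) \<and>
     (\<forall>x. li x \<ge> 0 \<and> 2 * (li x)^2 =
          sqrt 2 * sqrt (1 - (1 + \<delta>^2) * (B0 x)^2) - \<epsilon>^2 * (B0 x)^2 * (1 + \<delta>^2)^2) \<and>
     is_solution_operator (L0 lr li) S0 \<and>
     is_solution_operator (L1 lr li) S1
     \<longrightarrow>
     (\<forall>x s. x < s \<longrightarrow>
        opnorm (S0 x s) \<le> exp ((\<alpha> * \<delta>) powr (1/2) / 2 powr (1/4) * (x - s))) \<and>
     (\<forall>x s. s < x \<longrightarrow>
        opnorm (S1 x s) \<le> exp (- ((\<alpha> * \<delta>) powr (1/2) / 2 powr (1/4)) * (x - s)))"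
proof (rule exI[of _ 1], rule conjI[OF zero_less_one], intro allI impI, elim conjE, goal_cases)
  case (1 \<epsilon> \<delta> \<alpha> B0 lr li S0 S1)
  \<comment> \<open>Any \<open>\<epsilon>\<^sub>0\<close> works: the bounds hold for every \<open>\<epsilon>\<close>.\<close>
  from \<open>0 < \<alpha>\<close> \<open>1/3 \<le> \<delta>\<close> have "0 \<le> \<alpha> * \<delta>"
    by simp
  then show ?case
    using 1(9,10,12,13) by (rule solution_operators_exponential_bounds)
qed

end
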